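(* Let $k\in\omega\setminus\{0,1\}$, let $A$ be a nontrivial closed class of decision tables from $\mathcal M_k^\infty$, $\psi$ a bounded complexity measure, $T\in A$, $n\in\omega$, and suppose $l_\psi(T,n)>0$. Then there exists a mapping $\nu:E_k^{W(T)}\to\mathcal P(\omega)$ such that the table $T^*=J(\nu,T)$ satisfies $\psi^a(T^* )\le n$ and $\psi^d(T^* )\ge\log_k l_\psi(T,n)$.
   Context: Notation: $\omega=\{0,1,2,\dots\}$; $\mathcal P(\omega)$ is the set of nonempty finite subsets of $\omega$; for $k\in\omega\setminus\{0,1\}$, $E_k=\{0,1,\dots,k-1\}$. $P=\{f_i:i\in\omega\}$ is a set of attributes, $f_i\neq f_j$ for $i\ne j$. Decision tables: $\mathcal M_k^\infty$ is the set of rectangular tables filled with numbers from $E_k$, whose columns are labeled with pairwise different attributes from $P$, whose rows are pairwise different, and each row of which is labeled with a set from $\mathcal P(\omega)$ (its set of decisions). The empty table (no rows) is denoted $\Lambda$ and belongs to $\mathcal M_k^\infty$. For $T\in\mathcal M_k^\infty$: $\Delta(T)$ is the set of rows; $\Pi(T)$ is the intersection of the decision sets of all rows (common decisions); $\mathrm{At}(T)$ is the set of attributes labeling columns; $W(T)=|\mathrm{At}(T)|$. For nonempty $T$, $\Omega_k(T)$ is the set of finite words (including the empty word $\lambda$) over the alphabet $\{(f_i,\delta):f_i\in\mathrm{At}(T),\delta\in E_k\}$; for $\alpha=(f_{i_1},\delta_1)\cdots(f_{i_m},\delta_m)$, $T\alpha$ is the subtable of $T$ consisting of the rows having value $\delta_j$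 in the column $f_{i_j}$ for all $j$, and $T\lambda=T$. Operations: for $D\subseteq\mathrm{At}(T)$, $I(D,T)$ is obtained from $T$ by deleting the columns labeled with attributes from $D$ and, in each group of rows coinciding on the remaining columns, keeping only the first row; $I(\mathrm{At}(T),T)=\Lambda$. For $\nu:E_k^{|\mathrm{At}(T)|}\to\mathcal P(\omega)$, $J(\nu,T)$ is obtained by replacing the decision set of each row $\bar\delta$ by $\nu(\bar\delta)$. $[T]=\{J(\nu,I(D,T)):D\subseteq\mathrm{At}(T),\ \nu:E_k^{|\mathrm{At}(T)\setminus D|}\to\mathcal P(\omega)\}$; for nonempty $A\subseteq\mathcal M_k^\infty$, $[A]=\bigcup_{T\in A}[T]$. $A$ is a closed class if $[A]=A$; nontrivial if it contains a nonempty table. Decision trees: a $k$-decision tree is a finite directed rooted tree with at least two nodes in which the root and the edges leaving the root are unlabeled, each terminal node is labeled with a decision from $\omega$, and each other node is labeled with an attribute from $P$, each edge leaving such a node being labeled with a number from $E_k$. $\mathrm{At}(\Gamma)$ is the set of attributes labeling nodes of $\Gamma$. For a complete path $\tau=v_1,d_1,\dots,v_m,d_m,v_{m+1}$ (from the root to a terminal node), $\pi(\tau)=\lambda$ if $m=1$, and otherwise $\pi(\tau)=(f_{i_2},\delta_2)\cdots(f_{i_m},\delta_m)$ where $v_j$ is labeled $f_{i_j}$ and $d_j$ is labeled $\delta_j$; $T(\tau)=T\pi(\tau)$. For $T\ne\Lambda$, a nondeterministic decision tree for $T$ is a $k$-decision tree $\Gamma$ with $\mathrm{At}(\Gamma)\subseteq\mathrm{At}(T)$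 such that every row of $T$ belongs to $T(\tau)$ for some complete path $\tau$, and for every complete path $\tau$ either $T(\tau)=\Lambda$ or the decision at the terminal node of $\tau$ belongs to $\Pi(T(\tau))$. A deterministic decision tree for $T$ is a nondeterministic decision tree for $T$ in which, additionally, exactly one edge leaves the root and the edges leaving any node that is neither the root nor terminal are labeled with pairwise different numbers. Complexity measures: a partially bounded complexity measure is a function $\psi:P^*\to\omega$ on finite words over $P$ such that for all words $\alpha_1,\alpha_2$: $\psi(\alpha_1)=0$ iff $\alpha_1=\lambda$; $\psi(\alpha_1)$ is invariant under permutation of letters; $\psi(\alpha_1)\le\psi(\alpha_1\alpha_2)$; $\psi(\alpha_1\alpha_2)\le\psi(\alpha_1)+\psi(\alpha_2)$. It is bounded if in addition $\psi(\alpha)\ge|\alpha|$ for all $\alpha$. $\psi$ is extended to words $(f_{i_1},\delta_1)\cdots(f_{i_m},\delta_m)$ by $\psi(f_{i_1}\cdots f_{i_m})$ ($\psi(\lambda)=0$). For a $k$-decision tree $\Gamma$, $\psi(\Gamma)=\max_\tau\psi(\pi(\tau))$ over complete paths. For $T\ne\Lambda$, $\psi^d(T)$ (resp. $\psi^a(T)$) is the minimum of $\psi(\Gamma)$ over deterministic (resp. nondeterministic) decision trees $\Gamma$ for $T$; $\psi^d(\Lambda)=\psi^a(\Lambda)=0$. Covers: for $T\ne\Lambda$ and $n\in\omega$, $\Omega_k^n(T)=\{\alpha\in\Omega_k(T):\psi(\alpha)\le n\}$. A finite set $U\subseteq\Omega_k^n(T)$ is a $(\psi,n)$-cover of $T$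 if $\bigcup_{\alpha\in U}\Delta(T\alpha)=\Delta(T)$; it is irreducible if no proper subset of $U$ is a $(\psi,n)$-cover of $T$. $l_\psi(T,n)$ is the maximum cardinality of an irreducible $(\psi,n)$-cover of $T$; $l_\psi(\Lambda,n)=0$. *)

theory Defs
  imports Complex_Main "HOL-Library.Multiset"
begin

text \<open>Attribute f_i is identified with the natural number i.\<close>

record dtable =
  atts :: "nat list"
  rows :: "(nat list \<times> nat set) list"

definition Lam :: dtable where
  "Lam = \<lparr>atts = [], rows = []\<rparr>"

text \<open>Membership in M_k^infinity. Nonempty tables have at least one column;
the only table without rows is Lam.\<close>
definition valid_table :: "nat \<Rightarrow> dtable \<Rightarrow> bool" where
  "valid_table k T \<longleftrightarrow>
     distinct (atts T) \<and> distinct (map fst (rows T)) \<and>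
     (\<forall>(r, d) \<in> set (rows T). length r = length (atts T) \<and> (\<forall>v\<in>set r. v < k)
        \<and> finite d \<and> d \<noteq> {}) \<and>
     (rows T = [] \<longleftrightarrow> atts T = [])"

definition Delta :: "dtable \<Rightarrow> (nat list \<times> nat set) set" where
  "Delta T = set (rows T)"

definition Pi_dec :: "dtable \<Rightarrow> nat set" where
  "Pi_dec T = \<Inter> (snd ` set (rows T))"

definition W :: "dtable \<Rightarrow> nat" where
  "W T = length (atts T)"

definition col_val :: "nat list \<Rightarrow> nat list \<Rightarrow> nat \<Rightarrow> nat" where
  "col_val as r a = the (map_of (zip as r) a)"

definition Omega :: "nat \<Rightarrow> dtable \<Rightarrow> (nat \<times> nat) list set" where
  "Omega k T = {\<alpha>. \<forall>(a, v) \<in> set \<alpha>. a \<in> set (atts T) \<and> v < k}"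

definition sub :: "dtable \<Rightarrow> (nat \<times> nat) list \<Rightarrow> dtable" where
  "sub T \<alpha> = (let rs = filter (\<lambda>(r, d). \<forall>(a, v) \<in> set \<alpha>. col_val (atts T) r a = v) (rows T)
              in if rs = [] then Lam else \<lparr>atts = atts T, rows = rs\<rparr>)"

fun dedup_first :: "('a \<times> 'b) list \<Rightarrow> ('a \<times> 'b) list" where
  "dedup_first [] = []"
| "dedup_first (x # xs) = x # dedup_first (filter (\<lambda>y. fst y \<noteq> fst x) xs)"

definition proj :: "nat list \<Rightarrow> nat set \<Rightarrow> nat list \<Rightarrow> nat list" where
  "proj as D r = map snd (filter (\<lambda>(a, v). a \<notin> D) (zip as r))"

definition I_op :: "nat set \<Rightarrow> dtable \<Rightarrow> dtable" where
  "I_op D T = (let as' = filter (\<lambda>a. a \<notin> D) (atts T) in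
     if as' = [] then Lam
     else \<lparr>atts = as', rows = dedup_first (map (\<lambda>(r, d). (proj (atts T) D r, d)) (rows T))\<rparr>)"

text \<open>nu : E_k^m \<rightarrow> P(omega) (values outside E_k^m are irrelevant).\<close>
definition valid_map :: "nat \<Rightarrow> nat \<Rightarrow> (nat list \<Rightarrow> nat set) \<Rightarrow> bool" where
  "valid_map k m \<nu> \<longleftrightarrow>
     (\<forall>\<delta>. length \<delta> = m \<and> (\<forall>v\<in>set \<delta>. v < k) \<longrightarrow> finite (\<nu> \<delta>) \<and> \<nu> \<delta> \<noteq> {})"

definition J_op :: "(nat list \<Rightarrow> nat set) \<Rightarrow> dtable \<Rightarrow> dtable" where
  "J_op \<nu> T = \<lparr>atts = atts T, rows = map (\<lambda>(r, d). (r, \<nu> r)) (rows T)\<rparr>"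

definition closure1 :: "nat \<Rightarrow> dtable \<Rightarrow> dtable set" where
  "closure1 k T = {J_op \<nu> (I_op D T) | D \<nu>.
      D \<subseteq> set (atts T) \<and> valid_map k (card (set (atts T) - D)) \<nu>}"

definition closed_class :: "nat \<Rightarrow> dtable set \<Rightarrow> bool" where
  "closed_class k A \<longleftrightarrow> A \<noteq> {} \<and> A \<subseteq> {T. valid_table k T} \<and> (\<Union>T\<in>A. closure1 k T) = A"

definition nontrivial :: "dtable set \<Rightarrow> bool" where
  "nontrivial A \<longleftrightarrow> (\<exists>T\<in>A. rows T \<noteq> [])"

text \<open>A k-decision tree is the
(nonempty) list of subtrees hanging from the unlabeled root.\<close>
datatype dtree = Leaf nat | Node nat "(nat \<times> dtree) list"

fun wf_dt :: "nat \<Rightarrow> dtree \<Rightarrow> bool" where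
  "wf_dt k (Leaf d) = True"
| "wf_dt k (Node a es) = (es \<noteq> [] \<and> (\<forall>e\<in>set es. fst e < k \<and> wf_dt k (snd e)))"

fun det_dt :: "dtree \<Rightarrow> bool" where
  "det_dt (Leaf d) = True"
| "det_dt (Node a es) = (distinct (map fst es) \<and> (\<forall>e\<in>set es. det_dt (snd e)))"

fun atts_dt :: "dtree \<Rightarrow> nat set" where
  "atts_dt (Leaf d) = {}"
| "atts_dt (Node a es) = insert a (\<Union>e\<in>set es. atts_dt (snd e))"

fun paths :: "dtree \<Rightarrow> ((nat \<times> nat) list \<times> nat) set" where
  "paths (Leaf d) = {([], d)}"
| "paths (Node a es) = (\<Union>e\<in>set es. (\<lambda>(p, d). ((a, fst e) # p, d)) ` paths (snd e))"

definition ktree :: "nat \<Rightarrow> dtree list \<Rightarrow> bool" where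
  "ktree k \<Gamma> \<longleftrightarrow> \<Gamma> \<noteq> [] \<and> (\<forall>t\<in>set \<Gamma>. wf_dt k t)"

definition At_tree :: "dtree list \<Rightarrow> nat set" where
  "At_tree \<Gamma> = (\<Union>t\<in>set \<Gamma>. atts_dt t)"

definition cpaths :: "dtree list \<Rightarrow> ((nat \<times> nat) list \<times> nat) set" where
  "cpaths \<Gamma> = (\<Union>t\<in>set \<Gamma>. paths t)"

definition nondet_tree :: "nat \<Rightarrow> dtable \<Rightarrow> dtree list \<Rightarrow> bool" where
  "nondet_tree k T \<Gamma> \<longleftrightarrow> ktree k \<Gamma> \<and> At_tree \<Gamma> \<subseteq> set (atts T) \<and>
     (\<forall>r\<in>Delta T. \<exists>(p, d)\<in>cpaths \<Gamma>. r \<in> Delta (sub T p)) \<and>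
     (\<forall>(p, d)\<in>cpaths \<Gamma>. sub T p = Lam \<or> d \<in> Pi_dec (sub T p))"

definition det_tree :: "nat \<Rightarrow> dtable \<Rightarrow> dtree list \<Rightarrow> bool" where
  "det_tree k T \<Gamma> \<longleftrightarrow> nondet_tree k T \<Gamma> \<and> length \<Gamma> = 1 \<and> (\<forall>t\<in>set \<Gamma>. det_dt t)"

definition partially_bounded_cm :: "(nat list \<Rightarrow> nat) \<Rightarrow> bool" where
  "partially_bounded_cm \<psi> \<longleftrightarrow>
     (\<forall>\<alpha>. \<psi> \<alpha> = 0 \<longleftrightarrow> \<alpha> = []) \<and>
     (\<forall>\<alpha> \<beta>. mset \<alpha> = mset \<beta> \<longrightarrow> \<psi> \<alpha> = \<psi> \<beta>) \<and>
     (\<forall>\<alpha> \<beta>. \<psi> \<alpha> \<le> \<psi> (\<alpha> @ \<beta>)) \<and>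
     (\<forall>\<alpha> \<beta>. \<psi> (\<alpha> @ \<beta>) \<le> \<psi> \<alpha> + \<psi> \<beta>)"

definition bounded_cm :: "(nat list \<Rightarrow> nat) \<Rightarrow> bool" where
  "bounded_cm \<psi> \<longleftrightarrow> partially_bounded_cm \<psi> \<and> (\<forall>\<alpha>. length \<alpha> \<le> \<psi> \<alpha>)"

definition psi_word :: "(nat list \<Rightarrow> nat) \<Rightarrow> (nat \<times> nat) list \<Rightarrow> nat" where
  "psi_word \<psi> \<alpha> = \<psi> (map fst \<alpha>)"

definition psi_tree :: "(nat list \<Rightarrow> nat) \<Rightarrow> dtree list \<Rightarrow> nat" where
  "psi_tree \<psi> \<Gamma> = Max ((\<lambda>(p, d). psi_word \<psi> p) ` cpaths \<Gamma>)"

definition psi_d :: "(nat list \<Rightarrow> nat) \<Rightarrow> nat \<Rightarrow> dtable \<Rightarrow> nat" where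
  "psi_d \<psi> k T = (if T = Lam then 0 else LEAST m. \<exists>\<Gamma>. det_tree k T \<Gamma> \<and> psi_tree \<psi> \<Gamma> = m)"

definition psi_a :: "(nat list \<Rightarrow> nat) \<Rightarrow> nat \<Rightarrow> dtable \<Rightarrow> nat" where
  "psi_a \<psi> k T = (if T = Lam then 0 else LEAST m. \<exists>\<Gamma>. nondet_tree k T \<Gamma> \<and> psi_tree \<psi> \<Gamma> = m)"

definition is_cover :: "(nat list \<Rightarrow> nat) \<Rightarrow> nat \<Rightarrow> nat \<Rightarrow> dtable \<Rightarrow> (nat \<times> nat) list set \<Rightarrow> bool" where
  "is_cover \<psi> k n T U \<longleftrightarrow> finite U \<and> U \<subseteq> {\<alpha> \<in> Omega k T. psi_word \<psi> \<alpha> \<le> n} \<and>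
     (\<Union>\<alpha>\<in>U. Delta (sub T \<alpha>)) = Delta T"

definition irreducible_cover :: "(nat list \<Rightarrow> nat) \<Rightarrow> nat \<Rightarrow> nat \<Rightarrow> dtable \<Rightarrow> (nat \<times> nat) list set \<Rightarrow> bool" where
  "irreducible_cover \<psi> k n T U \<longleftrightarrow> is_cover \<psi> k n T U \<and> (\<forall>V. V \<subset> U \<longrightarrow> \<not> is_cover \<psi> k n T V)"

definition l_psi :: "(nat list \<Rightarrow> nat) \<Rightarrow> nat \<Rightarrow> dtable \<Rightarrow> nat \<Rightarrow> nat" where
  "l_psi \<psi> k T n = (if T = Lam then 0 else Max (card ` {U. irreducible_cover \<psi> k n T U}))"

end

theory Submission
  imports Defs
begin

text \<open>Fix an irreducible (psi,n)-cover of T of maximal size m, enumerated as the words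
u_0, ..., u_(m-1), and label every row by the set of indices i for which the row lies in the
subtable T u_i. The nondeterministic tree with one branch u_i ending in decision i then solves
the relabelled table with complexity at most n. By irreducibility every u_i has a private row,
which is labelled exactly {i}, so a deterministic tree must reach all m decisions. A
deterministic tree of complexity h has at most k^h terminal nodes, because a bounded measure
dominates the depth; hence k^h >= m.\<close>

lemma finite_paths: "finite (paths t)"
  by (induction t) (auto simp: snds.simps)

lemma paths_nonempty: "wf_dt k t \<Longrightarrow> paths t \<noteq> {}"
proof (induction t)
  case (Leaf d)
  then show ?case by simp
next
  case (Node a es)
  then obtain e where e: "e \<in> set es" by (cases es) auto
  with Node have "paths (snd e) \<noteq> {}" by (auto simp: snds.simps)
  with e show ?case by auto
qed

lemma card_paths_le_power:
  assumes "k \<ge> 1" "wf_dt k t" "det_dt t" "\<forall>(p, d)\<in>paths t. length p \<le> h"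
  shows "card (paths t) \<le> k ^ h"
  using assms
proof (induction t arbitrary: h)
  case (Leaf d)
  then show ?case by simp
next
  case (Node a es)
  have IH: "card (paths (snd e)) \<le> k ^ (h - 1)" if e: "e \<in> set es" for e
  proof -
    have "length p \<le> h - 1" if "(p, d) \<in> paths (snd e)" for p d
    proof -
      have "((a, fst e) # p, d) \<in> paths (Node a es)" using e that by force
      then show ?thesis using Node.prems(4) by fastforce
    qed
    moreover have "snd e \<in> Basic_BNFs.snds e" by (simp add: prod_set_defs)
    ultimately show ?thesis
      using Node.prems(2,3) e by (intro Node.IH[OF e _ \<open>k \<ge> 1\<close>]) auto
  qed
  obtain e p d where "e \<in> set es" "(p, d) \<in> paths (snd e)"
    using paths_nonempty[OF Node.prems(2)] by auto
  then have "((a, fst e) # p, d) \<in> paths (Node a es)" by force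
  then have "h \<ge> 1" using Node.prems(4) by fastforce
  have "card (fst ` set es) \<le> card {..<k}"
    using Node.prems(2) by (intro card_mono) auto
  then have card_es: "card (set es) \<le> k"
    using Node.prems(3) by (simp add: card_image distinct_map)
  have "card (paths (Node a es)) \<le> (\<Sum>e\<in>set es. card ((\<lambda>(p, d). ((a, fst e) # p, d)) ` paths (snd e)))"
    by (simp add: card_UN_le)
  also have "\<dots> \<le> (\<Sum>e\<in>set es. card (paths (snd e)))"
    by (intro sum_mono card_image_le finite_paths)
  also have "\<dots> \<le> (\<Sum>e\<in>set es. k ^ (h - 1))"
    by (intro sum_mono IH)
  also have "\<dots> \<le> k * k ^ (h - 1)"
    using card_es by simp
  also have "\<dots> = k ^ h"
    using \<open>h \<ge> 1\<close> by (simp add: power_eq_if)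
  finally show ?case .
qed

lemma card_cpaths_det_tree_le:
  assumes "det_tree k X \<Gamma>" "k \<ge> 1" "\<forall>\<alpha>. length \<alpha> \<le> \<psi> \<alpha>"
  shows "card (cpaths \<Gamma>) \<le> k ^ psi_tree \<psi> \<Gamma>"
proof -
  obtain t where t: "\<Gamma> = [t]"
    using assms(1) by (auto simp: det_tree_def length_Suc_conv)
  have cpaths: "cpaths \<Gamma> = paths t" by (simp add: cpaths_def t)
  have "card (paths t) \<le> k ^ psi_tree \<psi> \<Gamma>"
  proof (rule card_paths_le_power[OF assms(2)])
    show "wf_dt k t" "det_dt t"
      using assms(1) by (auto simp: det_tree_def nondet_tree_def ktree_def t)
    show "\<forall>(p, d)\<in>paths t. length p \<le> psi_tree \<psi> \<Gamma>"
    proof clarify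
      fix p d assume pd: "(p, d) \<in> paths t"
      have "length p \<le> psi_word \<psi> p"
        using assms(3) length_map[of fst p] unfolding psi_word_def by metis
      also have "\<dots> \<le> psi_tree \<psi> \<Gamma>"
        unfolding psi_tree_def cpaths
      proof (rule Max_ge)
        show "finite ((\<lambda>(p, d). psi_word \<psi> p) ` paths t)" by (simp add: finite_paths)
        show "psi_word \<psi> p \<in> (\<lambda>(p, d). psi_word \<psi> p) ` paths t" using pd by force
      qed
      finally show "length p \<le> psi_tree \<psi> \<Gamma>" .
    qed
  qed
  with cpaths show ?thesis by simp
qed

fun path_tree :: "(nat \<times> nat) list \<Rightarrow> nat \<Rightarrow> dtree" where
  "path_tree [] i = Leaf i"
| "path_tree ((a, v) # \<alpha>) i = Node a [(v, path_tree \<alpha> i)]"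

lemma paths_path_tree: "paths (path_tree \<alpha> i) = {(\<alpha>, i)}"
  by (induction \<alpha> i rule: path_tree.induct) auto

lemma wf_dt_path_tree: "\<forall>x\<in>set \<alpha>. snd x < k \<Longrightarrow> wf_dt k (path_tree \<alpha> i)"
  by (induction \<alpha> i rule: path_tree.induct) auto

lemma atts_dt_path_tree: "atts_dt (path_tree \<alpha> i) = fst ` set \<alpha>"
  by (induction \<alpha> i rule: path_tree.induct) auto

definition path_forest :: "(nat \<times> nat) list list \<Rightarrow> dtree list" where
  "path_forest us = map (\<lambda>i. path_tree (us ! i) i) [0..<length us]"

lemma cpaths_path_forest: "cpaths (path_forest us) = (\<lambda>i. (us ! i, i)) ` {..<length us}"
  by (auto simp: cpaths_def path_forest_def paths_path_tree)

fun full_tree :: "nat \<Rightarrow> ((nat \<times> nat) list \<Rightarrow> nat) \<Rightarrow> nat list \<Rightarrow> (nat \<times> nat) list \<Rightarrow> dtree" where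
  "full_tree k c [] pre = Leaf (c pre)"
| "full_tree k c (a # as) pre = Node a (map (\<lambda>v. (v, full_tree k c as (pre @ [(a, v)]))) [0..<k])"

lemma wf_dt_full_tree: "k \<ge> 1 \<Longrightarrow> wf_dt k (full_tree k c as pre)"
  by (induction as arbitrary: pre) auto

lemma det_dt_full_tree: "det_dt (full_tree k c as pre)"
  by (induction as arbitrary: pre) (auto simp: comp_def)

lemma atts_dt_full_tree: "atts_dt (full_tree k c as pre) \<subseteq> set as"
  by (induction as arbitrary: pre) auto

lemma paths_full_tree:
  "(p, d) \<in> paths (full_tree k c as pre) \<Longrightarrow> map fst p = as \<and> d = c (pre @ p)"
proof (induction as arbitrary: pre p)
  case Nil
  then show ?case by simp
next
  case (Cons a as)
  then obtain v p' where "p = (a, v) # p'" "(p', d) \<in> paths (full_tree k c as (pre @ [(a, v)]))"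
    by auto
  with Cons.IH show ?case by fastforce
qed

lemma zip_in_paths_full_tree:
  "length vs = length as \<Longrightarrow> \<forall>v\<in>set vs. v < k \<Longrightarrow>
   (zip as vs, c (pre @ zip as vs)) \<in> paths (full_tree k c as pre)"
proof (induction as arbitrary: vs pre)
  case Nil
  then show ?case by simp
next
  case (Cons a as)
  then obtain v vs' where vs: "vs = v # vs'" by (cases vs) auto
  with Cons.prems have "(zip as vs', c ((pre @ [(a, v)]) @ zip as vs')) \<in> paths (full_tree k c as (pre @ [(a, v)]))"
    by (intro Cons.IH) auto
  with vs Cons.prems show ?case by force
qed

definition matches :: "nat list \<Rightarrow> nat list \<Rightarrow> (nat \<times> nat) list \<Rightarrow> bool" where
  "matches as r \<alpha> \<longleftrightarrow> (\<forall>(a, v)\<in>set \<alpha>. col_val as r a = v)"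

lemma Delta_sub: "Delta (sub X \<alpha>) = {x \<in> Delta X. matches (atts X) (fst x) \<alpha>}"
  unfolding sub_def Let_def Delta_def Lam_def matches_def
  by (auto simp: filter_empty_conv split: prod.splits)

lemma Delta_Lam: "Delta Lam = {}"
  by (simp add: Delta_def Lam_def)

lemma Pi_dec_eq_Inter_Delta: "Pi_dec X = \<Inter> (snd ` Delta X)"
  by (simp add: Pi_dec_def Delta_def)

lemma Delta_J_op: "Delta (J_op \<nu> X) = (\<lambda>(r, d). (r, \<nu> r)) ` Delta X"
  by (auto simp: Delta_def J_op_def)

lemma atts_J_op [simp]: "atts (J_op \<nu> X) = atts X"
  by (simp add: J_op_def)

lemma col_val_nth:
  "distinct as \<Longrightarrow> length r = length as \<Longrightarrow> j < length as \<Longrightarrow> col_val as r (as ! j) = r ! j"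
  unfolding col_val_def by (subst map_of_is_SomeI[where y = "r ! j"]) (auto simp: set_zip)

lemma matches_zip_iff:
  assumes "distinct as" "length r = length as" "length vs = length as"
  shows "matches as r (zip as vs) \<longleftrightarrow> r = vs"
proof
  assume m: "matches as r (zip as vs)"
  show "r = vs"
  proof (rule nth_equalityI)
    fix i assume "i < length r"
    then have "(as ! i, vs ! i) \<in> set (zip as vs)" using assms by (auto simp: set_zip)
    then show "r ! i = vs ! i" using m col_val_nth[OF assms(1,2)] \<open>i < length r\<close> assms(2)
      by (auto simp: matches_def)
  qed (use assms in simp)
qed (use assms in \<open>auto simp: matches_def set_zip col_val_nth\<close>)

lemma valid_table_rowD:
  "valid_table k X \<Longrightarrow> (r, d) \<in> Delta X \<Longrightarrow>
   length r = length (atts X) \<and> (\<forall>v\<in>set r. v < k) \<and> finite d \<and> d \<noteq> {}"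
  by (auto simp: valid_table_def Delta_def)

lemma valid_table_eq_Lam_iff: "valid_table k X \<Longrightarrow> X = Lam \<longleftrightarrow> Delta X = {}"
  by (auto simp: valid_table_def Delta_def Lam_def dtable.equality)

lemma J_op_neq_Lam: "valid_table k X \<Longrightarrow> X \<noteq> Lam \<Longrightarrow> J_op \<nu> X \<noteq> Lam"
  by (metis Delta_J_op Delta_Lam image_is_empty valid_table_eq_Lam_iff)

lemma valid_table_J_op:
  assumes "valid_table k X" "valid_map k (W X) \<nu>"
  shows "valid_table k (J_op \<nu> X)"
  using assms unfolding valid_table_def valid_map_def W_def J_op_def
  by (auto simp: comp_def case_prod_unfold)

lemma Pi_dec_sub_zip_nonempty:
  assumes "valid_table k X" "length vs = length (atts X)"
  shows "Pi_dec (sub X (zip (atts X) vs)) \<noteq> {}"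
proof -
  have dist: "distinct (atts X)" "distinct (map fst (rows X))"
    using assms(1) by (auto simp: valid_table_def)
  have rows: "r = vs \<and> (r, d) \<in> set (rows X)" if "(r, d) \<in> Delta (sub X (zip (atts X) vs))" for r d
  proof -
    from that have "(r, d) \<in> Delta X" "matches (atts X) r (zip (atts X) vs)"
      by (auto simp: Delta_sub)
    then show ?thesis
      using matches_zip_iff[OF dist(1)] valid_table_rowD[OF assms(1)] assms(2)
      by (auto simp: Delta_def)
  qed
  show ?thesis
  proof (cases "Delta (sub X (zip (atts X) vs)) = {}")
    case True
    then show ?thesis by (simp add: Pi_dec_eq_Inter_Delta)
  next
    case False
    then obtain d where x: "(vs, d) \<in> Delta (sub X (zip (atts X) vs))"
      using rows by fastforce
    have "d \<subseteq> Pi_dec (sub X (zip (atts X) vs))"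
      unfolding Pi_dec_eq_Inter_Delta
    proof (rule Inter_greatest)
      fix D assume "D \<in> snd ` Delta (sub X (zip (atts X) vs))"
      then obtain r where "(r, D) \<in> Delta (sub X (zip (atts X) vs))" by auto
      with rows x have "(vs, D) \<in> set (rows X)" "(vs, d) \<in> set (rows X)" by auto
      with dist(2) show "d \<subseteq> D" by (auto dest: eq_key_imp_eq_value)
    qed
    moreover have "d \<noteq> {}"
      using x valid_table_rowD[OF assms(1)] by (auto simp: Delta_sub)
    ultimately show ?thesis by blast
  qed
qed

lemma det_tree_full_tree:
  assumes "valid_table k X" "k \<ge> 1"
  defines "c \<equiv> \<lambda>p. SOME d. d \<in> Pi_dec (sub X p)"
  shows "det_tree k X [full_tree k c (atts X) []]"
proof -
  let ?t = "full_tree k c (atts X) []"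
  have complete: "\<exists>(p, d)\<in>paths ?t. x \<in> Delta (sub X p)" if x: "x \<in> Delta X" for x
  proof -
    obtain r d where rd: "x = (r, d)" by (cases x)
    have "(zip (atts X) r, c (zip (atts X) r)) \<in> paths ?t"
      using zip_in_paths_full_tree[of r "atts X" k c "[]"] valid_table_rowD[OF assms(1)] x rd by auto
    moreover have "x \<in> Delta (sub X (zip (atts X) r))"
      using x rd valid_table_rowD[OF assms(1)] assms(1) matches_zip_iff
      by (auto simp: Delta_sub valid_table_def)
    ultimately show ?thesis by blast
  qed
  have sound: "d \<in> Pi_dec (sub X p)" if "(p, d) \<in> paths ?t" for p d
  proof -
    have p: "map fst p = atts X" "d = c p"
      using that paths_full_tree[of p d k c "atts X" "[]"] by auto
    then have "p = zip (atts X) (map snd p)" by (metis zip_map_fst_snd)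
    then have "Pi_dec (sub X p) \<noteq> {}"
      using Pi_dec_sub_zip_nonempty[OF assms(1), of "map snd p"] p(1) by (metis length_map)
    then show ?thesis unfolding p(2) c_def by (auto intro: someI)
  qed
  show ?thesis
    using complete sound wf_dt_full_tree[OF assms(2)] det_dt_full_tree atts_dt_full_tree
    by (auto simp: det_tree_def nondet_tree_def ktree_def At_tree_def cpaths_def)
qed

lemma psi_a_le_psi_tree: "X \<noteq> Lam \<Longrightarrow> nondet_tree k X \<Gamma> \<Longrightarrow> psi_a \<psi> k X \<le> psi_tree \<psi> \<Gamma>"
  unfolding psi_a_def by (auto intro: Least_le)

lemma psi_d_attained:
  assumes "valid_table k X" "X \<noteq> Lam" "k \<ge> 1"
  obtains \<Gamma> where "det_tree k X \<Gamma>" "psi_tree \<psi> \<Gamma> = psi_d \<psi> k X"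
proof -
  have "\<exists>m \<Gamma>. det_tree k X \<Gamma> \<and> psi_tree \<psi> \<Gamma> = m"
    using det_tree_full_tree[OF assms(1,3)] by blast
  from LeastI_ex[OF this] show thesis
    using that assms(2) unfolding psi_d_def by auto
qed

lemma singleton_decision_in_cpaths:
  assumes "nondet_tree k X \<Gamma>" "x \<in> Delta X" "snd x = {i}"
  shows "i \<in> snd ` cpaths \<Gamma>"
proof -
  obtain p d where pd: "(p, d) \<in> cpaths \<Gamma>" "x \<in> Delta (sub X p)"
    using assms(1,2) unfolding nondet_tree_def by blast
  have "sub X p \<noteq> Lam"
    using pd(2) Delta_Lam by auto
  moreover have "sub X p = Lam \<or> d \<in> Pi_dec (sub X p)"
    using assms(1) pd(1) unfolding nondet_tree_def by fast
  ultimately have "d \<in> snd x"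
    using pd(2) by (auto simp: Pi_dec_eq_Inter_Delta)
  with pd(1) assms(3) show ?thesis by force
qed

lemma log_card_le_psi_d:
  assumes "valid_table k X" "X \<noteq> Lam" "k \<ge> 2" "\<forall>\<alpha>. length \<alpha> \<le> \<psi> \<alpha>"
    and "finite D" "D \<noteq> {}" "\<forall>i\<in>D. \<exists>x\<in>Delta X. snd x = {i}"
  shows "log k (card D) \<le> psi_d \<psi> k X"
proof -
  have "k \<ge> 1" using assms(3) by simp
  obtain \<Gamma> where \<Gamma>: "det_tree k X \<Gamma>" "psi_tree \<psi> \<Gamma> = psi_d \<psi> k X"
    by (rule psi_d_attained[OF assms(1,2) \<open>k \<ge> 1\<close>])
  have fin: "finite (cpaths \<Gamma>)"
    by (simp add: cpaths_def finite_paths)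
  have "nondet_tree k X \<Gamma>"
    using \<Gamma>(1) by (simp add: det_tree_def)
  then have "D \<subseteq> snd ` cpaths \<Gamma>"
    using assms(7) singleton_decision_in_cpaths[OF \<open>nondet_tree k X \<Gamma>\<close>] by blast
  then have "card D \<le> card (snd ` cpaths \<Gamma>)"
    using fin by (intro card_mono) auto
  also have "\<dots> \<le> card (cpaths \<Gamma>)"
    using fin by (rule card_image_le)
  also have "\<dots> \<le> k ^ psi_d \<psi> k X"
    using card_cpaths_det_tree_le[OF \<Gamma>(1) \<open>k \<ge> 1\<close> assms(4)] \<Gamma>(2) by simp
  finally have "real (card D) \<le> real k ^ psi_d \<psi> k X"
    by (metis of_nat_le_iff of_nat_power)
  moreover have "card D > 0"
    using assms(5,6) by (simp add: card_gt_0_iff)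
  ultimately show ?thesis
    using assms(3) by (intro log_of_power_le) auto
qed

lemma irreducible_cover_private_row:
  assumes "irreducible_cover \<psi> k n T U" "\<alpha> \<in> U"
  obtains x where "x \<in> Delta (sub T \<alpha>)" "\<forall>\<beta>\<in>U - {\<alpha>}. x \<notin> Delta (sub T \<beta>)"
proof -
  have cover: "is_cover \<psi> k n T U" and "\<not> is_cover \<psi> k n T (U - {\<alpha>})"
    using assms unfolding irreducible_cover_def by auto
  then have "(\<Union>\<beta>\<in>U - {\<alpha>}. Delta (sub T \<beta>)) \<noteq> Delta T"
    unfolding is_cover_def by auto
  moreover have "(\<Union>\<beta>\<in>U - {\<alpha>}. Delta (sub T \<beta>)) \<subseteq> Delta T"
    by (auto simp: Delta_sub)
  ultimately obtain x where "x \<in> Delta T" "\<forall>\<beta>\<in>U - {\<alpha>}. x \<notin> Delta (sub T \<beta>)"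
    by blast
  moreover from this cover have "x \<in> Delta (sub T \<alpha>)"
    unfolding is_cover_def by blast
  ultimately show thesis using that by blast
qed

lemma finite_irreducible_covers:
  assumes "\<forall>\<alpha>. length \<alpha> \<le> \<psi> \<alpha>"
  shows "finite {U. irreducible_cover \<psi> k n T U}"
proof -
  have "length \<alpha> \<le> n" if "psi_word \<psi> \<alpha> \<le> n" for \<alpha>
    using assms[rule_format, of "map fst \<alpha>"] that by (simp add: psi_word_def)
  then have "{\<alpha> \<in> Omega k T. psi_word \<psi> \<alpha> \<le> n} \<subseteq> {xs. set xs \<subseteq> set (atts T) \<times> {..<k} \<and> length xs \<le> n}"
    unfolding Omega_def by auto
  then have "finite {\<alpha> \<in> Omega k T. psi_word \<psi> \<alpha> \<le> n}"
    by (rule finite_subset) (intro finite_lists_length_le; simp)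
  then show ?thesis
    by (rule finite_subset[rotated, OF finite_Pow_iff[THEN iffD2]])
      (auto simp: irreducible_cover_def is_cover_def)
qed

lemma l_psi_attained:
  assumes "valid_table k T" "T \<noteq> Lam" "bounded_cm \<psi>"
  obtains U where "irreducible_cover \<psi> k n T U" "card U = l_psi \<psi> k T n"
proof -
  have "\<forall>\<alpha>. \<psi> \<alpha> = 0 \<longleftrightarrow> \<alpha> = []"
    using assms(3) unfolding bounded_cm_def partially_bounded_cm_def by (rule conjunct1[OF conjunct1])
  then have "\<psi> [] = 0" by simp
  have "Delta T \<noteq> {}"
    using assms(1,2) valid_table_eq_Lam_iff by blast
  then have "Delta (sub T []) = Delta T"
    by (simp add: Delta_sub matches_def)
  with \<open>\<psi> [] = 0\<close> have "is_cover \<psi> k n T {[]}"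
    by (simp add: is_cover_def Omega_def psi_word_def)
  moreover have "\<not> is_cover \<psi> k n T {}"
    using \<open>Delta T \<noteq> {}\<close> by (simp add: is_cover_def)
  moreover have "V = {}" if "V \<subset> {[]}" for V :: "(nat \<times> nat) list set"
    using that by blast
  ultimately have "irreducible_cover \<psi> k n T {[]}"
    unfolding irreducible_cover_def by blast
  moreover have "finite {U. irreducible_cover \<psi> k n T U}"
    using assms(3) by (intro finite_irreducible_covers) (simp add: bounded_cm_def)
  ultimately have "Max (card ` {U. irreducible_cover \<psi> k n T U}) \<in> card ` {U. irreducible_cover \<psi> k n T U}"
    by (intro Max_in finite_imageI) blast+
  moreover have "l_psi \<psi> k T n = Max (card ` {U. irreducible_cover \<psi> k n T U})"
    unfolding l_psi_def using assms(2) by (rule if_not_P)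
  ultimately obtain U where "irreducible_cover \<psi> k n T U" "card U = l_psi \<psi> k T n"
    by (metis (no_types, lifting) imageE mem_Collect_eq)
  then show thesis by (rule that)
qed

text \<open>The default \<open>{0}\<close> only makes the labelling a valid map; it never occurs on rows of a
table covered by \<open>us\<close>.\<close>

definition cover_labelling :: "nat list \<Rightarrow> (nat \<times> nat) list list \<Rightarrow> nat list \<Rightarrow> nat set" where
  "cover_labelling as us r =
     (let I = {i. i < length us \<and> matches as r (us ! i)} in if I = {} then {0} else I)"

lemma valid_map_cover_labelling: "valid_map k m (cover_labelling as us)"
  by (simp add: valid_map_def cover_labelling_def Let_def)

lemma nondet_tree_path_forest:
  assumes "is_cover \<psi> k n T (set us)" "us \<noteq> []"
  shows "nondet_tree k (J_op (cover_labelling (atts T) us) T) (path_forest us)"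
proof -
  let ?\<nu> = "cover_labelling (atts T) us"
  have Omega: "a \<in> set (atts T) \<and> v < k" if "i < length us" "(a, v) \<in> set (us ! i)" for i a v
    using assms(1) that nth_mem unfolding is_cover_def Omega_def by fastforce
  have label: "i \<in> ?\<nu> r" if "i < length us" "matches (atts T) r (us ! i)" for i r
    using that by (auto simp: cover_labelling_def Let_def)
  show ?thesis
    unfolding nondet_tree_def
  proof (intro conjI)
    show "ktree k (path_forest us)"
      using Omega assms(2) by (fastforce simp: ktree_def path_forest_def intro!: wf_dt_path_tree)
    show "At_tree (path_forest us) \<subseteq> set (atts (J_op ?\<nu> T))"
      using Omega by (fastforce simp: At_tree_def path_forest_def atts_dt_path_tree)
    show "\<forall>x\<in>Delta (J_op ?\<nu> T). \<exists>(p, d)\<in>cpaths (path_forest us). x \<in> Delta (sub (J_op ?\<nu> T) p)"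
    proof
      fix x assume "x \<in> Delta (J_op ?\<nu> T)"
      then obtain r d where rd: "(r, d) \<in> Delta T" "x = (r, ?\<nu> r)" by (auto simp: Delta_J_op)
      then obtain \<alpha> where "\<alpha> \<in> set us" "(r, d) \<in> Delta (sub T \<alpha>)"
        using assms(1) unfolding is_cover_def by blast
      then obtain i where i: "i < length us" "matches (atts T) r (us ! i)"
        by (auto simp: in_set_conv_nth Delta_sub)
      have "x \<in> Delta (sub (J_op ?\<nu> T) (us ! i))"
        using rd i(2) by (auto simp: Delta_sub Delta_J_op)
      moreover have "(us ! i, i) \<in> cpaths (path_forest us)"
        using i(1) by (simp add: cpaths_path_forest)
      ultimately show "\<exists>(p, d)\<in>cpaths (path_forest us). x \<in> Delta (sub (J_op ?\<nu> T) p)"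
        by blast
    qed
    show "\<forall>(p, d)\<in>cpaths (path_forest us). sub (J_op ?\<nu> T) p = Lam \<or> d \<in> Pi_dec (sub (J_op ?\<nu> T) p)"
      using label by (auto simp: cpaths_path_forest Pi_dec_eq_Inter_Delta Delta_sub Delta_J_op)
  qed
qed

lemma psi_a_cover_labelling_le:
  assumes "valid_table k T" "T \<noteq> Lam" "is_cover \<psi> k n T (set us)" "us \<noteq> []"
  shows "psi_a \<psi> k (J_op (cover_labelling (atts T) us) T) \<le> n"
proof -
  have "J_op (cover_labelling (atts T) us) T \<noteq> Lam"
    using assms(1,2) by (rule J_op_neq_Lam)
  then have "psi_a \<psi> k (J_op (cover_labelling (atts T) us) T) \<le> psi_tree \<psi> (path_forest us)"
    using psi_a_le_psi_tree nondet_tree_path_forest[OF assms(3,4)] by blast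
  also have "\<dots> \<le> n"
    using assms(3,4) nth_mem unfolding psi_tree_def cpaths_path_forest is_cover_def
    by (intro Max.boundedI) fastforce+
  finally show ?thesis .
qed

lemma log_length_le_psi_d_cover_labelling:
  assumes "valid_table k T" "T \<noteq> Lam" "k \<ge> 2" "bounded_cm \<psi>"
    and "irreducible_cover \<psi> k n T (set us)" "distinct us" "us \<noteq> []"
  shows "log k (length us) \<le> psi_d \<psi> k (J_op (cover_labelling (atts T) us) T)"
proof -
  let ?\<nu> = "cover_labelling (atts T) us"
  have "\<exists>x\<in>Delta (J_op ?\<nu> T). snd x = {i}" if i: "i < length us" for i
  proof -
    obtain x where x: "x \<in> Delta (sub T (us ! i))" "\<forall>\<beta>\<in>set us - {us ! i}. x \<notin> Delta (sub T \<beta>)"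
      by (rule irreducible_cover_private_row[OF assms(5) nth_mem[OF i]])
    have "x \<in> Delta T"
      using x(1) by (simp add: Delta_sub)
    have "matches (atts T) (fst x) (us ! j) \<longleftrightarrow> j = i" if j: "j < length us" for j
    proof
      assume "matches (atts T) (fst x) (us ! j)"
      with \<open>x \<in> Delta T\<close> have "us ! j \<notin> set us - {us ! i}"
        using x(2) by (auto simp: Delta_sub)
      then show "j = i"
        using nth_eq_iff_index_eq[OF assms(6) j i] nth_mem[OF j] by blast
    qed (use x(1) in \<open>simp add: Delta_sub\<close>)
    then have "?\<nu> (fst x) = {i}"
      using i by (auto simp: cover_labelling_def Let_def)
    moreover have "(fst x, ?\<nu> (fst x)) \<in> Delta (J_op ?\<nu> T)"
      unfolding Delta_J_op using \<open>x \<in> Delta T\<close> by (rule rev_image_eqI) (simp add: case_prod_beta)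
    ultimately show ?thesis by force
  qed
  moreover have "valid_table k (J_op ?\<nu> T)"
    by (intro valid_table_J_op assms(1) valid_map_cover_labelling)
  moreover have "J_op ?\<nu> T \<noteq> Lam"
    using assms(1,2) by (rule J_op_neq_Lam)
  moreover have "\<forall>\<alpha>. length \<alpha> \<le> \<psi> \<alpha>"
    using assms(4) by (simp add: bounded_cm_def)
  ultimately have "log k (card {..<length us}) \<le> psi_d \<psi> k (J_op ?\<nu> T)"
    using assms(3,7) by (intro log_card_le_psi_d) auto
  then show ?thesis by simp
qed

theorem lemma4:
  fixes k n :: nat and A :: "dtable set" and \<psi> :: "nat list \<Rightarrow> nat" and T :: dtable
  assumes "k \<ge> 2"
    and "closed_class k A" and "nontrivial A"
    and "bounded_cm \<psi>"
    and "T \<in> A"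
    and "l_psi \<psi> k T n > 0"
  shows "\<exists>\<nu>. valid_map k (W T) \<nu> \<and>
           psi_a \<psi> k (J_op \<nu> T) \<le> n \<and>
           real (psi_d \<psi> k (J_op \<nu> T)) \<ge> log (real k) (real (l_psi \<psi> k T n))"
proof -
  have valid: "valid_table k T"
    using assms(2,5) by (auto simp: closed_class_def)
  have "T \<noteq> Lam"
    using assms(6) by (auto simp: l_psi_def)
  then obtain U where U: "irreducible_cover \<psi> k n T U" "card U = l_psi \<psi> k T n"
    using l_psi_attained[OF valid _ assms(4)] by blast
  have "finite U"
    using U(1) by (simp add: irreducible_cover_def is_cover_def)
  then obtain us where us: "set us = U" "distinct us"
    using finite_distinct_list by blast
  have len: "length us = l_psi \<psi> k T n"
    using distinct_card[OF us(2)] us(1) U(2) by simp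
  with assms(6) have "us \<noteq> []" by auto
  let ?\<nu> = "cover_labelling (atts T) us"
  have "psi_a \<psi> k (J_op ?\<nu> T) \<le> n"
    using psi_a_cover_labelling_le[OF valid \<open>T \<noteq> Lam\<close> _ \<open>us \<noteq> []\<close>] U(1) us(1)
    by (simp add: irreducible_cover_def)
  moreover have "log k (l_psi \<psi> k T n) \<le> psi_d \<psi> k (J_op ?\<nu> T)"
    using log_length_le_psi_d_cover_labelling[OF valid \<open>T \<noteq> Lam\<close> assms(1,4) _ us(2) \<open>us \<noteq> []\<close>]
      U(1) us(1) len by simp
  ultimately show ?thesis
    using valid_map_cover_labelling by blast
qed

end
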